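(* Let $X$ be a proper geodesic space with basepoint $x_0$. Suppose $p_n,p\in\partial_M X_{x_0}$ and $p_n\to p$ in the topology of $\partial_M X_{x_0}$. Then there exists a Morse gauge $N$ such that $p_n,p\in\partial_M^N X_{x_0}$ for all $n$ and $p_n\to p$ in the topology of $\partial_M^N X_{x_0}$.
   Context: A Morse gauge is a function $N:[1,\infty)\times[0,\infty)\to[0,\infty)$; a geodesic $\gamma$ is $N$-Morse if every $(\lambda,\epsilon)$-quasi-geodesic with endpoints on $\gamma$ lies in the $N(\lambda,\epsilon)$-neighborhood of $\gamma$. $\partial_M X_{x_0}$ is the set of Morse geodesic rays based at $x_0$ modulo finite Hausdorff distance; $\partial_M^N X_{x_0}$ is the subset of classes containing an $N$-Morse ray based at $x_0$, with the quotient of the compact-open topology on the set of $N$-Morse rays based at $x_0$; Morse gauges are ordered pointwise and $\partial_M X_{x_0}=\varinjlim_N\partial_M^N X_{x_0}$ has the direct limit topology ($U$ open iff $U\cap\partial_M^N X_{x_0}$ is open in $\partial_M^N X_{x_0}$ for all $N$). *)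

theory Defs
  imports "HOL-Analysis.Analysis"
begin

definition proper_space :: "'a::metric_space itself \<Rightarrow> bool" where
  "proper_space _ \<longleftrightarrow> (\<forall>(x::'a) r. compact (cball x r))"

definition geodesic_space :: "'a::metric_space itself \<Rightarrow> bool" where
  "geodesic_space _ \<longleftrightarrow> (\<forall>(x::'a) y. \<exists>g::real \<Rightarrow> 'a. g 0 = x \<and> g (dist x y) = y \<and>
      (\<forall>s\<in>{0..dist x y}. \<forall>t\<in>{0..dist x y}. dist (g s) (g t) = \<bar>s - t\<bar>))"

text \<open>A Morse gauge N : [1,oo) x [0,oo) -> [0,oo), represented as a curried real function;
  its values outside the domain are irrelevant.\<close>
definition morse_gauge :: "(real \<Rightarrow> real \<Rightarrow> real) \<Rightarrow> bool" where
  "morse_gauge N \<longleftrightarrow> (\<forall>l e. l \<ge> 1 \<longrightarrow> e \<ge> 0 \<longrightarrow> N l e \<ge> 0)"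

definition quasi_geodesic :: "real \<Rightarrow> real \<Rightarrow> real \<Rightarrow> real \<Rightarrow> (real \<Rightarrow> 'a::metric_space) \<Rightarrow> bool" where
  "quasi_geodesic l e a b c \<longleftrightarrow> a \<le> b \<and>
     (\<forall>s\<in>{a..b}. \<forall>t\<in>{a..b}. \<bar>s - t\<bar> / l - e \<le> dist (c s) (c t) \<and> dist (c s) (c t) \<le> l * \<bar>s - t\<bar> + e)"

text \<open>Geodesic rays based at x0. Rays are functions on [0,oo); by convention they are
  extended by the constant x0 on the negative reals, so that each ray has a unique representative.\<close>
definition geodesic_ray :: "'a::metric_space \<Rightarrow> (real \<Rightarrow> 'a) \<Rightarrow> bool" where
  "geodesic_ray x0 g \<longleftrightarrow> g 0 = x0 \<and> (\<forall>t<0. g t = x0) \<and>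
     (\<forall>s\<ge>0. \<forall>t\<ge>0. dist (g s) (g t) = \<bar>s - t\<bar>)"

definition N_Morse_ray :: "(real \<Rightarrow> real \<Rightarrow> real) \<Rightarrow> (real \<Rightarrow> 'a::metric_space) \<Rightarrow> bool" where
  "N_Morse_ray N g \<longleftrightarrow> (\<forall>l e a b (c::real \<Rightarrow> 'a). l \<ge> 1 \<longrightarrow> e \<ge> 0 \<longrightarrow> quasi_geodesic l e a b c \<longrightarrow>
       c a \<in> g ` {0..} \<longrightarrow> c b \<in> g ` {0..} \<longrightarrow>
       (\<forall>t\<in>{a..b}. infdist (c t) (g ` {0..}) \<le> N l e))"

definition Morse_ray :: "'a::metric_space \<Rightarrow> (real \<Rightarrow> 'a) \<Rightarrow> bool" where
  "Morse_ray x0 g \<longleftrightarrow> geodesic_ray x0 g \<and> (\<exists>N. morse_gauge N \<and> N_Morse_ray N g)"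

definition NMorse_rays :: "'a::metric_space \<Rightarrow> (real \<Rightarrow> real \<Rightarrow> real) \<Rightarrow> (real \<Rightarrow> 'a) set" where
  "NMorse_rays x0 N = {g. geodesic_ray x0 g \<and> N_Morse_ray N g}"

definition fin_hausdorff :: "(real \<Rightarrow> 'a::metric_space) \<Rightarrow> (real \<Rightarrow> 'a) \<Rightarrow> bool" where
  "fin_hausdorff g h \<longleftrightarrow> (\<exists>C. (\<forall>s\<ge>0. \<exists>t\<ge>0. dist (g s) (h t) \<le> C) \<and> (\<forall>t\<ge>0. \<exists>s\<ge>0. dist (g s) (h t) \<le> C))"

definition morse_class :: "'a::metric_space \<Rightarrow> (real \<Rightarrow> 'a) \<Rightarrow> (real \<Rightarrow> 'a) set" where
  "morse_class x0 g = {h. Morse_ray x0 h \<and> fin_hausdorff g h}"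

definition Morse_boundary :: "'a::metric_space \<Rightarrow> (real \<Rightarrow> 'a) set set" where
  "Morse_boundary x0 = morse_class x0 ` {g. Morse_ray x0 g}"

definition Morse_boundary_N :: "'a::metric_space \<Rightarrow> (real \<Rightarrow> real \<Rightarrow> real) \<Rightarrow> (real \<Rightarrow> 'a) set set" where
  "Morse_boundary_N x0 N = morse_class x0 ` NMorse_rays x0 N"

definition compact_open_on :: "(real \<Rightarrow> 'a::topological_space) set \<Rightarrow> (real \<Rightarrow> 'a) topology" where
  "compact_open_on S = subtopology
     (topology_generated_by {{f. f ` K \<subseteq> U} | K U. compact K \<and> K \<subseteq> {0..} \<and> open U}) S"

definition quotient_topology :: "'a topology \<Rightarrow> ('a \<Rightarrow> 'b) \<Rightarrow> 'b topology" where
  "quotient_topology T q = topology (\<lambda>U. U \<subseteq> q ` topspace T \<and> openin T {x \<in> topspace T. q x \<in> U})"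

definition Morse_boundary_N_top :: "'a::metric_space \<Rightarrow> (real \<Rightarrow> real \<Rightarrow> real) \<Rightarrow> (real \<Rightarrow> 'a) set topology" where
  "Morse_boundary_N_top x0 N = quotient_topology (compact_open_on (NMorse_rays x0 N)) (morse_class x0)"

definition Morse_boundary_top :: "'a::metric_space \<Rightarrow> (real \<Rightarrow> 'a) set topology" where
  "Morse_boundary_top x0 = topology (\<lambda>U. U \<subseteq> Morse_boundary x0 \<and>
     (\<forall>N. morse_gauge N \<longrightarrow> openin (Morse_boundary_N_top x0 N) (U \<inter> Morse_boundary_N x0 N)))"

end

(*
  Represent p_n and p by Morse rays. First, the rays representing p_n satisfy a common Morse
  gauge: otherwise the classes of rays with ever worse Morse constants, apart from finitely many,
  form a subset of the boundary that meets every stratum in a finite set, hence is closed in the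
  direct limit topology, misses p, and is visited by p_n infinitely often.
  Let N dominate the gauge of p and a slight shift of this common gauge. By Arzela-Ascoli in the
  proper space, every subsequence of the rays has a further subsequence converging pointwise, and
  hence in the compact-open topology, to a ray f that is again N-Morse. The class of f is p, for
  otherwise the classes of the subsequence different from p together with the class of f would
  form a closed set missing p that the subsequence visits infinitely often. Since the quotient
  map is continuous, p_n converges to p in the N-stratum.
*)
theory Submission
  imports Defs "HOL-Library.Diagonal_Subsequence"
begin

lemma geodesic_ray_dist_base:
  assumes "geodesic_ray x0 g" "t \<ge> 0"
  shows "dist x0 (g t) = t"
  using assms unfolding geodesic_ray_def by (metis abs_of_nonneg diff_0 abs_minus_cancel order_refl)

lemma geodesic_ray_lipschitz:
  assumes "geodesic_ray x0 g"
  shows "dist (g s) (g t) \<le> \<bar>s - t\<bar>"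
proof -
  have "dist (g s) (g t) = \<bar>max 0 s - max 0 t\<bar>"
    using assms unfolding geodesic_ray_def
    by (cases "s < 0"; cases "t < 0") (auto simp: max_def)
  also have "\<dots> \<le> \<bar>s - t\<bar>" by (simp add: max_def)
  finally show ?thesis .
qed

lemma continuous_on_1_lipschitz:
  fixes f :: "real \<Rightarrow> 'a::metric_space"
  assumes "\<And>s t. dist (f s) (f t) \<le> \<bar>s - t\<bar>"
  shows "continuous_on S f"
  by (rule lipschitz_on_continuous_on[of 1]) (auto intro!: lipschitz_onI simp: dist_real_def assms)

lemma geodesic_ray_continuous_on: "geodesic_ray x0 g \<Longrightarrow> continuous_on S g"
  by (intro continuous_on_1_lipschitz geodesic_ray_lipschitz)

lemma infdist_le_infdist_add:
  assumes "A \<noteq> {}" "\<And>a. a \<in> A \<Longrightarrow> \<exists>b\<in>B. dist a b \<le> D"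
  shows "infdist y B \<le> infdist y A + D"
proof -
  have "infdist y B - D \<le> infdist y A"
    unfolding infdist_notempty[OF assms(1)]
  proof (rule cINF_greatest[OF assms(1)])
    fix a assume "a \<in> A"
    then obtain b where "b \<in> B" "dist a b \<le> D" using assms(2) by blast
    have "infdist y B \<le> dist y b" using \<open>b \<in> B\<close> by (rule infdist_le)
    also have "\<dots> \<le> dist y a + dist a b" by (rule dist_triangle)
    finally show "infdist y B - D \<le> dist y a" using \<open>dist a b \<le> D\<close> by linarith
  qed
  then show ?thesis by linarith
qed

lemma quasi_geodesicI:
  assumes "a \<le> b"
    and "\<And>s t. s \<in> {a..b} \<Longrightarrow> t \<in> {a..b} \<Longrightarrow> s \<le> t \<Longrightarrow>
           (t - s) / l - e \<le> dist (c s) (c t) \<and> dist (c s) (c t) \<le> l * (t - s) + e"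
  shows "quasi_geodesic l e a b c"
proof -
  have "\<bar>s - t\<bar> / l - e \<le> dist (c s) (c t) \<and> dist (c s) (c t) \<le> l * \<bar>s - t\<bar> + e"
    if st: "s \<in> {a..b}" "t \<in> {a..b}" for s t
  proof (cases "s \<le> t")
    case True then show ?thesis using assms(2)[OF st] by simp
  next
    case False then show ?thesis using assms(2)[OF st(2,1)] by (simp add: dist_commute)
  qed
  then show ?thesis unfolding quasi_geodesic_def using assms(1) by blast
qed

lemma geodesic_ray_then_segment_quasi_geodesic:
  assumes g: "geodesic_ray x0 g" and \<tau>: "\<tau> \<ge> 0" and L: "L \<ge> 0"
    and \<sigma>0: "\<sigma> 0 = g \<tau>" and \<sigma>: "\<And>s t. s \<in> {0..L} \<Longrightarrow> t \<in> {0..L} \<Longrightarrow> dist (\<sigma> s) (\<sigma> t) = \<bar>s - t\<bar>"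
    and closest: "\<And>u. u \<in> {0..\<tau>} \<Longrightarrow> L \<le> dist (\<sigma> L) (g u)"
  shows "quasi_geodesic 3 0 0 (\<tau> + L) (\<lambda>u. if u \<le> \<tau> then g u else \<sigma> (u - \<tau>))"
    (is "quasi_geodesic _ _ _ _ ?c")
proof (rule quasi_geodesicI)
  have g_iso: "dist (g s) (g t) = \<bar>s - t\<bar>" if "s \<ge> 0" "t \<ge> 0" for s t
    using g that unfolding geodesic_ray_def by blast
  have c_seg: "?c u = \<sigma> (u - \<tau>)" if "\<tau> \<le> u" for u
    using that \<sigma>0 by auto
  fix s t assume s: "s \<in> {0..\<tau>+L}" and t: "t \<in> {0..\<tau>+L}" and "s \<le> t"
  consider "t \<le> \<tau>" | "\<tau> \<le> s" | "s < \<tau>" "\<tau> < t" by linarith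
  then have "t - s \<le> 3 * dist (?c s) (?c t) \<and> dist (?c s) (?c t) \<le> 3 * (t - s)"
  proof cases
    case 1 then show ?thesis using s t \<open>s \<le> t\<close> g_iso[of s t] by auto
  next
    case 2 then show ?thesis using s t \<open>s \<le> t\<close> \<sigma>[of "s - \<tau>" "t - \<tau>"] c_seg[of s] c_seg[of t] by auto
  next
    case 3
    define v w where "v = g s" and "w = \<sigma> (t - \<tau>)"
    have c: "?c s = v" "?c t = w" using 3 by (auto simp: v_def w_def)
    have wg: "dist w (g \<tau>) = t - \<tau>" using \<sigma>[of "t - \<tau>" 0] \<sigma>0 3 t by (auto simp: w_def)
    have wL: "dist (\<sigma> L) w = L - (t - \<tau>)" using \<sigma>[of L "t - \<tau>"] 3 t L by (auto simp: w_def)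
    have vg: "dist v (g \<tau>) = \<tau> - s" using g_iso[of s \<tau>] 3 s by (auto simp: v_def)
    have "L \<le> dist (\<sigma> L) v" using closest[of s] 3 s by (simp add: v_def)
    also have "\<dots> \<le> dist (\<sigma> L) w + dist w v" by (rule dist_triangle)
    finally have "t - \<tau> \<le> dist v w" using wL by (simp add: dist_commute)
    moreover have "\<tau> - s \<le> dist v w + (t - \<tau>)" using dist_triangle[of v "g \<tau>" w] vg wg by (simp add: dist_commute)
    moreover have "dist v w \<le> t - s" using dist_triangle[of v w "g \<tau>"] vg wg by (simp add: dist_commute)
    ultimately show ?thesis using c 3 by auto
  qed
  then show "(t - s) / 3 - 0 \<le> dist (?c s) (?c t) \<and> dist (?c s) (?c t) \<le> 3 * (t - s) + 0"
    by auto
qed (use \<tau> L in simp)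

section \<open>Fellow travelling of Morse rays\<close>

lemma N_Morse_rayD:
  assumes "N_Morse_ray N g" "l \<ge> 1" "e \<ge> 0" "quasi_geodesic l e a b c"
    "c a \<in> g ` {0..}" "c b \<in> g ` {0..}" "t \<in> {a..b}"
  shows "infdist (c t) (g ` {0..}) \<le> N l e"
  using assms unfolding N_Morse_ray_def by blast

text \<open>The (3,0)-quasi-geodesic c follows g' up to a point closest to a far-out point g S of g
  and then a geodesic to g S; it has both endpoints on g and passes through g' t.\<close>
lemma N_Morse_ray_infdist_fellow:
  fixes g g' :: "real \<Rightarrow> 'a::metric_space"
  assumes geo: "geodesic_space TYPE('a)" and g: "geodesic_ray x0 g" and M: "N_Morse_ray M g"
    and g': "geodesic_ray x0 g'" and D: "\<forall>s\<ge>0. \<exists>u\<ge>0. dist (g s) (g' u) \<le> D" and t: "t \<ge> 0"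
  shows "infdist (g' t) (g ` {0..}) \<le> M 3 0"
proof -
  have D0: "D \<ge> 0" using D zero_le_dist order_trans by blast
  define S where "S = t + D + 1"
  have S0: "S \<ge> 0" using t D0 by (simp add: S_def)
  obtain u0 where u0: "u0 \<ge> 0" "dist (g S) (g' u0) \<le> D" using D S0 by blast
  have "u0 \<le> S + D"
    using dist_triangle[of x0 "g' u0" "g S"] geodesic_ray_dist_base[OF g' u0(1)]
      geodesic_ray_dist_base[OF g S0] u0(2) by (simp add: dist_commute)
  have "continuous_on {0..S+D} (\<lambda>u. dist (g S) (g' u))"
    by (intro continuous_intros geodesic_ray_continuous_on[OF g'])
  then have "\<exists>\<tau>\<in>{0..S+D}. \<forall>u\<in>{0..S+D}. dist (g S) (g' \<tau>) \<le> dist (g S) (g' u)"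
    by (intro continuous_attains_inf[OF compact_Icc]) (use S0 D0 in simp_all)
  then obtain \<tau> where \<tau>: "\<tau> \<in> {0..S+D}" "\<And>u. u \<in> {0..S+D} \<Longrightarrow> dist (g S) (g' \<tau>) \<le> dist (g S) (g' u)"
    by blast
  define L where "L = dist (g' \<tau>) (g S)"
  have "L \<le> D" using \<tau>(2)[of u0] u0 \<open>u0 \<le> S + D\<close> by (simp add: L_def dist_commute)
  have "S = dist x0 (g S)" using geodesic_ray_dist_base[OF g S0] by simp
  also have "\<dots> \<le> dist x0 (g' \<tau>) + L" unfolding L_def by (rule dist_triangle)
  also have "\<dots> = \<tau> + L" using geodesic_ray_dist_base[OF g'] \<tau>(1) by simp
  finally have "t \<le> \<tau>" using \<open>L \<le> D\<close> by (simp add: S_def)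
  obtain \<sigma> :: "real \<Rightarrow> 'a" where \<sigma>: "\<sigma> 0 = g' \<tau>" "\<sigma> L = g S"
    "\<And>s s'. s \<in> {0..L} \<Longrightarrow> s' \<in> {0..L} \<Longrightarrow> dist (\<sigma> s) (\<sigma> s') = \<bar>s - s'\<bar>"
    using geo unfolding geodesic_space_def L_def by metis
  define c where "c u = (if u \<le> \<tau> then g' u else \<sigma> (u - \<tau>))" for u
  have "quasi_geodesic 3 0 0 (\<tau> + L) c"
    unfolding c_def
  proof (rule geodesic_ray_then_segment_quasi_geodesic[OF g' _ _ \<sigma>(1,3)])
    fix u assume "u \<in> {0..\<tau>}"
    then show "L \<le> dist (\<sigma> L) (g' u)" using \<tau> \<sigma>(2) by (simp add: L_def dist_commute)
  qed (use \<tau>(1) in \<open>auto simp: L_def\<close>)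
  moreover have "c 0 \<in> g ` {0..}"
    using \<tau>(1) g g' unfolding geodesic_ray_def c_def by (auto intro!: image_eqI[of _ _ 0])
  moreover have "c (\<tau> + L) \<in> g ` {0..}" using \<sigma> S0 by (auto simp: c_def L_def)
  moreover have "t \<in> {0..\<tau>+L}" using t \<open>t \<le> \<tau>\<close> by (simp add: L_def add_increasing2)
  ultimately have "infdist (c t) (g ` {0..}) \<le> M 3 0"
    by (intro N_Morse_rayD[OF M]) auto
  then show ?thesis using \<open>t \<le> \<tau>\<close> by (simp add: c_def)
qed

lemma N_Morse_ray_fellow:
  fixes g g' :: "real \<Rightarrow> 'a::metric_space"
  assumes geo: "geodesic_space TYPE('a)" and g: "geodesic_ray x0 g" and M: "N_Morse_ray M g"
    and g': "geodesic_ray x0 g'" and D: "\<forall>s\<ge>0. \<exists>u\<ge>0. dist (g s) (g' u) \<le> D" and t: "t \<ge> 0"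
  shows "dist (g t) (g' t) \<le> 2 * M 3 0"
proof (rule field_le_epsilon)
  fix e :: real assume "0 < e"
  then have "infdist (g' t) (g ` {0..}) < M 3 0 + e/2"
    using N_Morse_ray_infdist_fellow[OF assms] by linarith
  then obtain s where s: "s \<ge> 0" "dist (g' t) (g s) < M 3 0 + e/2"
    by (auto simp: infdist_notempty cINF_less_iff)
  have "\<bar>t - s\<bar> \<le> dist (g s) (g' t)"
    using dist_triangle[of x0 "g s" "g' t"] dist_triangle[of x0 "g' t" "g s"]
      geodesic_ray_dist_base[OF g s(1)] geodesic_ray_dist_base[OF g' t] by (simp add: dist_commute)
  moreover have "dist (g t) (g' t) \<le> \<bar>t - s\<bar> + dist (g s) (g' t)"
    using dist_triangle[of "g t" "g' t" "g s"] geodesic_ray_lipschitz[OF g, of t s] by linarith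
  ultimately show "dist (g t) (g' t) \<le> 2 * M 3 0 + e"
    using s by (simp add: dist_commute)
qed

lemma fin_hausdorff_refl: "fin_hausdorff g g"
  unfolding fin_hausdorff_def by (rule exI[of _ 0]) auto

lemma fin_hausdorff_sym: "fin_hausdorff g h \<Longrightarrow> fin_hausdorff h g"
  unfolding fin_hausdorff_def by (metis dist_commute)

lemma fin_hausdorff_trans:
  assumes "fin_hausdorff g h" "fin_hausdorff h k"
  shows "fin_hausdorff g k"
proof -
  obtain C1 where C1: "\<forall>s\<ge>0. \<exists>t\<ge>0. dist (g s) (h t) \<le> C1" "\<forall>t\<ge>0. \<exists>s\<ge>0. dist (g s) (h t) \<le> C1"
    using assms(1) unfolding fin_hausdorff_def by blast
  obtain C2 where C2: "\<forall>s\<ge>0. \<exists>t\<ge>0. dist (h s) (k t) \<le> C2" "\<forall>t\<ge>0. \<exists>s\<ge>0. dist (h s) (k t) \<le> C2"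
    using assms(2) unfolding fin_hausdorff_def by blast
  have "dist (g s) (k t) \<le> C1 + C2" if "dist (g s) (h u) \<le> C1" "dist (h u) (k t) \<le> C2" for s t u
    using that dist_triangle[of "g s" "k t" "h u"] by linarith
  then have "(\<forall>s\<ge>0. \<exists>t\<ge>0. dist (g s) (k t) \<le> C1 + C2) \<and> (\<forall>t\<ge>0. \<exists>s\<ge>0. dist (g s) (k t) \<le> C1 + C2)"
    using C1 C2 by meson
  then show ?thesis unfolding fin_hausdorff_def by blast
qed

lemma fin_hausdorffI: "(\<And>t. t \<ge> 0 \<Longrightarrow> dist (g t) (h t) \<le> C) \<Longrightarrow> fin_hausdorff g h"
  unfolding fin_hausdorff_def by (rule exI[of _ C]) blast

lemma morse_class_eq: "fin_hausdorff g h \<Longrightarrow> morse_class x0 g = morse_class x0 h"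
  unfolding morse_class_def
  by (metis fin_hausdorff_sym fin_hausdorff_trans)

lemma fin_hausdorff_if_morse_class_eq:
  assumes "Morse_ray x0 h" "morse_class x0 g = morse_class x0 h"
  shows "fin_hausdorff g h"
  using assms fin_hausdorff_refl unfolding morse_class_def by blast

lemma Morse_ray_if_NMorse_rays: "morse_gauge M \<Longrightarrow> g \<in> NMorse_rays x0 M \<Longrightarrow> Morse_ray x0 g"
  unfolding NMorse_rays_def Morse_ray_def by blast

lemma Morse_boundary_NI: "g \<in> NMorse_rays x0 N \<Longrightarrow> morse_class x0 g \<in> Morse_boundary_N x0 N"
  unfolding Morse_boundary_N_def by blast

lemma Morse_boundary_N_subset: "morse_gauge N \<Longrightarrow> Morse_boundary_N x0 N \<subseteq> Morse_boundary x0"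
  unfolding Morse_boundary_N_def Morse_boundary_def using Morse_ray_if_NMorse_rays by blast

lemma Morse_boundary_representative:
  assumes "q \<in> Morse_boundary x0"
  obtains g N where "morse_gauge N" "g \<in> NMorse_rays x0 N" "q = morse_class x0 g"
  using assms unfolding Morse_boundary_def Morse_ray_def NMorse_rays_def by blast

lemma NMorse_rays_same_class_fellow:
  fixes g h :: "real \<Rightarrow> 'a::metric_space"
  assumes geo: "geodesic_space TYPE('a)" and g: "g \<in> NMorse_rays x0 M" and h: "Morse_ray x0 h"
    and eq: "morse_class x0 g = morse_class x0 h" and t: "t \<ge> 0"
  shows "dist (g t) (h t) \<le> 2 * M 3 0"
proof -
  obtain C where "\<forall>s\<ge>0. \<exists>u\<ge>0. dist (g s) (h u) \<le> C"
    using fin_hausdorff_if_morse_class_eq[OF h eq] unfolding fin_hausdorff_def by blast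
  moreover have "geodesic_ray x0 g" "N_Morse_ray M g" using g unfolding NMorse_rays_def by auto
  moreover have "geodesic_ray x0 h" using h unfolding Morse_ray_def by auto
  ultimately show ?thesis using N_Morse_ray_fellow[OF geo _ _ _ _ t] by blast
qed

section \<open>Stability of Morse bounds\<close>

definition Morse_bounded :: "real \<Rightarrow> real \<Rightarrow> real \<Rightarrow> (real \<Rightarrow> 'a::metric_space) \<Rightarrow> bool" where
  "Morse_bounded l e B g \<longleftrightarrow> (\<forall>a b (c::real \<Rightarrow> 'a). quasi_geodesic l e a b c \<longrightarrow>
     c a \<in> g ` {0..} \<longrightarrow> c b \<in> g ` {0..} \<longrightarrow> (\<forall>t\<in>{a..b}. infdist (c t) (g ` {0..}) \<le> B))"

lemma N_Morse_ray_iff_Morse_bounded: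
  "N_Morse_ray N g \<longleftrightarrow> (\<forall>l e. l \<ge> 1 \<longrightarrow> e \<ge> 0 \<longrightarrow> Morse_bounded l e (N l e) g)"
  unfolding N_Morse_ray_def Morse_bounded_def by blast

lemma Morse_bounded_mono: "Morse_bounded l e B g \<Longrightarrow> B \<le> B' \<Longrightarrow> Morse_bounded l e B' g"
  unfolding Morse_bounded_def by force

lemma quasi_geodesic_perturb:
  assumes "quasi_geodesic l e a b c" "\<And>t. dist (c' t) (c t) \<le> D"
  shows "quasi_geodesic l (e + 2 * D) a b c'"
  unfolding quasi_geodesic_def
proof (intro conjI ballI)
  show "a \<le> b" using assms(1) unfolding quasi_geodesic_def by blast
  fix s t assume "s \<in> {a..b}" "t \<in> {a..b}"
  then have "\<bar>s - t\<bar> / l - e \<le> dist (c s) (c t)" "dist (c s) (c t) \<le> l * \<bar>s - t\<bar> + e"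
    using assms(1) unfolding quasi_geodesic_def by auto
  moreover have "\<bar>dist (c' s) (c' t) - dist (c s) (c t)\<bar> \<le> dist (c' s) (c s) + dist (c' t) (c t)"
    by metric
  moreover have "dist (c' s) (c s) \<le> D" "dist (c' t) (c t) \<le> D" by (fact assms(2))+
  ultimately show "\<bar>s - t\<bar> / l - (e + 2 * D) \<le> dist (c' s) (c' t)"
    "dist (c' s) (c' t) \<le> l * \<bar>s - t\<bar> + (e + 2 * D)"
    by linarith+
qed

lemma quasi_geodesic_mono:
  assumes "quasi_geodesic l e a b c" "e \<le> e'"
  shows "quasi_geodesic l e' a b c"
proof -
  have "quasi_geodesic l (e + 2 * ((e' - e) / 2)) a b c"
    by (rule quasi_geodesic_perturb[OF assms(1)]) (use assms(2) in simp)
  moreover have "e + 2 * ((e' - e) / 2) = e'" by (simp add: field_simps)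
  ultimately show ?thesis by metis
qed

lemma N_Morse_ray_shift: "N_Morse_ray N g \<Longrightarrow> N_Morse_ray (\<lambda>l e. N l (e + 1) + 1) g"
proof -
  assume N: "N_Morse_ray N g"
  show ?thesis
    unfolding N_Morse_ray_def
  proof (intro allI impI ballI)
    fix l e a b c t assume le: "1 \<le> l" "0 \<le> e" and "quasi_geodesic l e a b c"
      and ends: "c a \<in> g ` {0..}" "c b \<in> g ` {0..}" "t \<in> {a..b}"
    then have "quasi_geodesic l (e + 1) a b c" by (simp add: quasi_geodesic_mono)
    then have "infdist (c t) (g ` {0..}) \<le> N l (e + 1)"
      using N_Morse_rayD[OF N] le ends by simp
    then show "infdist (c t) (g ` {0..}) \<le> N l (e + 1) + 1" by simp
  qed
qed

lemma N_Morse_ray_mono: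
  "N_Morse_ray N g \<Longrightarrow> (\<And>l e. l \<ge> 1 \<Longrightarrow> e \<ge> 0 \<Longrightarrow> N l e \<le> N' l e) \<Longrightarrow> N_Morse_ray N' g"
  unfolding N_Morse_ray_iff_Morse_bounded using Morse_bounded_mono by blast

lemma Morse_bounded_if_close:
  assumes \<phi>: "N_Morse_ray M \<phi>" and close: "\<And>t. t \<ge> 0 \<Longrightarrow> dist (\<phi> t) (\<psi> t) \<le> D"
    and "l \<ge> 1" "e \<ge> 0"
  shows "Morse_bounded l e (M l (e + 2 * D) + 2 * D) \<psi>"
  unfolding Morse_bounded_def
proof (intro allI impI ballI)
  fix a b c u assume qg: "quasi_geodesic l e a b c" and "c a \<in> \<psi> ` {0..}" "c b \<in> \<psi> ` {0..}"
    and u: "u \<in> {a..b}"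
  then obtain s1 s2 where s: "s1 \<ge> 0" "c a = \<psi> s1" "s2 \<ge> 0" "c b = \<psi> s2" by auto
  have "D \<ge> 0" using close[of 0] zero_le_dist[of "\<phi> 0" "\<psi> 0"] by linarith
  define c' where "c' v = (if v = a then \<phi> s1 else if v = b then \<phi> s2 else c v)" for v
  have c'c: "dist (c' v) (c v) \<le> D" for v
    using close s \<open>D \<ge> 0\<close> by (auto simp: c'_def)
  have "c' a \<in> \<phi> ` {0..}" "c' b \<in> \<phi> ` {0..}" using s by (auto simp: c'_def)
  then have "infdist (c' u) (\<phi> ` {0..}) \<le> M l (e + 2 * D)"
    using N_Morse_rayD[OF \<phi> _ _ quasi_geodesic_perturb[OF qg c'c]] assms(3,4) \<open>D \<ge> 0\<close> u by simp
  moreover have "infdist (c' u) (\<psi> ` {0..}) \<le> infdist (c' u) (\<phi> ` {0..}) + D"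
    by (rule infdist_le_infdist_add) (use close in auto)
  moreover have "infdist (c u) (\<psi> ` {0..}) \<le> infdist (c' u) (\<psi> ` {0..}) + dist (c u) (c' u)"
    by (rule infdist_triangle)
  ultimately show "infdist (c u) (\<psi> ` {0..}) \<le> M l (e + 2 * D) + 2 * D"
    using c'c[of u] by (simp add: dist_commute)
qed

lemma Morse_bounded_same_class:
  fixes \<phi> \<psi> :: "real \<Rightarrow> 'a::metric_space"
  assumes "geodesic_space TYPE('a)" "\<phi> \<in> NMorse_rays x0 M" "Morse_ray x0 \<psi>"
    "morse_class x0 \<phi> = morse_class x0 \<psi>" "l \<ge> 1" "e \<ge> 0"
  shows "Morse_bounded l e (M l (e + 4 * M 3 0) + 4 * M 3 0) \<psi>"
  using Morse_bounded_if_close[of M \<phi> \<psi> "2 * M 3 0" l e]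
    NMorse_rays_same_class_fellow[OF assms(1-4)] assms unfolding NMorse_rays_def by simp

lemma uniform_convergence_1_lipschitz:
  fixes \<phi> :: "nat \<Rightarrow> real \<Rightarrow> 'a::metric_space" and f :: "real \<Rightarrow> 'a"
  assumes lip: "\<And>n s t. dist (\<phi> n s) (\<phi> n t) \<le> \<bar>s - t\<bar>" and lipf: "\<And>s t. dist (f s) (f t) \<le> \<bar>s - t\<bar>"
    and conv: "\<And>t. t \<ge> 0 \<Longrightarrow> (\<lambda>n. \<phi> n t) \<longlonglongrightarrow> f t" and e: "e > 0"
  shows "eventually (\<lambda>n. \<forall>t\<in>{0..R}. dist (\<phi> n t) (f t) < e) sequentially"
proof -
  define \<delta> where "\<delta> = e / 3"
  have \<delta>: "\<delta> > 0" using e by (simp add: \<delta>_def)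
  define G where "G = (\<lambda>i. real i * \<delta>) ` {..nat \<lceil>R / \<delta>\<rceil>}"
  have "\<forall>g\<in>G. eventually (\<lambda>n. dist (\<phi> n g) (f g) < \<delta>) sequentially"
    using conv \<delta> by (auto simp: G_def intro!: tendstoD)
  then have "eventually (\<lambda>n. \<forall>g\<in>G. dist (\<phi> n g) (f g) < \<delta>) sequentially"
    by (intro eventually_ball_finite) (simp_all add: G_def)
  then show ?thesis
  proof (rule eventually_mono, intro ballI)
    fix n t assume H: "\<forall>g\<in>G. dist (\<phi> n g) (f g) < \<delta>" and t: "t \<in> {0..R}"
    define g where "g = real (nat \<lfloor>t / \<delta>\<rfloor>) * \<delta>"
    have "t / \<delta> \<ge> 0" using t \<delta> by simp
    then have "real (nat \<lfloor>t / \<delta>\<rfloor>) \<le> t / \<delta>" "t / \<delta> < real (nat \<lfloor>t / \<delta>\<rfloor>) + 1"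
      by linarith+
    then have "g \<le> t" "t < g + \<delta>"
      using \<delta> unfolding g_def by (simp_all add: pos_le_divide_eq pos_divide_less_eq distrib_right)
    moreover have "g \<in> G"
    proof -
      have "t / \<delta> \<le> R / \<delta>" using t \<delta> by (simp add: divide_right_mono)
      then have "nat \<lfloor>t / \<delta>\<rfloor> \<le> nat \<lceil>R / \<delta>\<rceil>" by linarith
      then show ?thesis unfolding G_def g_def by blast
    qed
    ultimately have "dist (\<phi> n t) (\<phi> n g) < \<delta>" "dist (\<phi> n g) (f g) < \<delta>" "dist (f g) (f t) < \<delta>"
      using lip[of n t g] lipf[of g t] H by auto
    then show "dist (\<phi> n t) (f t) < e"
      using dist_triangle[of "\<phi> n t" "f t" "\<phi> n g"] dist_triangle[of "\<phi> n g" "f t" "f g"]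
      by (simp add: \<delta>_def)
  qed
qed

lemma geodesic_ray_pointwise_limit:
  assumes rays: "\<And>j. geodesic_ray x0 (\<psi> j)" and conv: "\<And>t. (\<lambda>j. \<psi> j t) \<longlonglongrightarrow> f t"
  shows "geodesic_ray x0 f"
proof -
  have "f t = x0" if "t \<le> 0" for t
  proof -
    have "\<psi> j t = x0" for j using rays[of j] that unfolding geodesic_ray_def by (cases "t = 0") auto
    then have "(\<lambda>j. x0) \<longlonglongrightarrow> f t" using conv[of t] by simp
    then show ?thesis by (rule LIMSEQ_unique[OF tendsto_const, symmetric])
  qed
  moreover have "dist (f s) (f t) = \<bar>s - t\<bar>" if "s \<ge> 0" "t \<ge> 0" for s t
  proof -
    have "dist (\<psi> j s) (\<psi> j t) = \<bar>s - t\<bar>" for j using rays[of j] that unfolding geodesic_ray_def by auto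
    then have "(\<lambda>j. \<bar>s - t\<bar>) \<longlonglongrightarrow> dist (f s) (f t)" using tendsto_dist[OF conv conv, of s t] by simp
    then show ?thesis by (rule LIMSEQ_unique[OF tendsto_const, symmetric])
  qed
  ultimately show ?thesis unfolding geodesic_ray_def by auto
qed

lemma Morse_bounded_pointwise_limit:
  fixes \<psi> :: "nat \<Rightarrow> real \<Rightarrow> 'a::metric_space"
  assumes rays: "\<And>j. geodesic_ray x0 (\<psi> j)" and conv: "\<And>t. (\<lambda>j. \<psi> j t) \<longlonglongrightarrow> f t"
    and bounded: "\<And>j. Morse_bounded l (e + 1) \<beta> (\<psi> j)"
  shows "Morse_bounded l e (\<beta> + 1) f"
  unfolding Morse_bounded_def
proof (intro allI impI ballI)
  fix a b c u assume qg: "quasi_geodesic l e a b c" and "c a \<in> f ` {0..}" "c b \<in> f ` {0..}"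
    and u: "u \<in> {a..b}"
  then obtain s1 s2 where s: "s1 \<ge> 0" "c a = f s1" "s2 \<ge> 0" "c b = f s2" by auto
  have f: "geodesic_ray x0 f" by (rule geodesic_ray_pointwise_limit[OF rays conv])
  define R where "R = dist x0 (c u) + \<bar>\<beta>\<bar> + 1 + s1 + s2"
  have "eventually (\<lambda>j. \<forall>t\<in>{0..R}. dist (\<psi> j t) (f t) < 1/4) sequentially"
    by (rule uniform_convergence_1_lipschitz)
      (use geodesic_ray_lipschitz[OF rays] geodesic_ray_lipschitz[OF f] conv in auto)
  then obtain j where j: "\<forall>t\<in>{0..R}. dist (\<psi> j t) (f t) < 1/4"
    unfolding eventually_sequentially by blast
  define c' where "c' v = (if v = a then \<psi> j s1 else if v = b then \<psi> j s2 else c v)" for v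
  have c'c: "dist (c' v) (c v) \<le> 1/4" for v
    using j s by (auto simp: c'_def R_def less_imp_le)
  have "quasi_geodesic l (e + 1) a b c'"
    using quasi_geodesic_mono[OF quasi_geodesic_perturb[OF qg c'c]] by simp
  moreover have "c' a \<in> \<psi> j ` {0..}" "c' b \<in> \<psi> j ` {0..}" using s by (auto simp: c'_def)
  ultimately have "infdist (c' u) (\<psi> j ` {0..}) \<le> \<beta>"
    using bounded[of j] u unfolding Morse_bounded_def by blast
  then have "infdist (c u) (\<psi> j ` {0..}) < \<beta> + 1/2"
    using infdist_triangle[of "c u" "\<psi> j ` {0..}" "c' u"] c'c[of u] by (simp add: dist_commute)
  then obtain s where s: "s \<ge> 0" "dist (c u) (\<psi> j s) < \<beta> + 1/2"
    by (auto simp: infdist_notempty cINF_less_iff)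
  have "s \<le> dist x0 (c u) + dist (c u) (\<psi> j s)"
    using dist_triangle[of x0 "\<psi> j s" "c u"] geodesic_ray_dist_base[OF rays s(1)] by simp
  then have "s \<in> {0..R}"
    using s \<open>s1 \<ge> 0\<close> \<open>s2 \<ge> 0\<close> abs_ge_self[of \<beta>] unfolding R_def atLeastAtMost_iff by linarith
  then have "dist (c u) (f s) \<le> \<beta> + 1"
    using j s dist_triangle[of "c u" "f s" "\<psi> j s"] by fastforce
  then show "infdist (c u) (f ` {0..}) \<le> \<beta> + 1"
    using s(1) by (intro infdist_le2[of "f s"]) auto
qed

lemma N_Morse_ray_pointwise_limit:
  assumes "\<And>j. geodesic_ray x0 (\<psi> j)" "\<And>j. N_Morse_ray N (\<psi> j)" "\<And>t. (\<lambda>j. \<psi> j t) \<longlonglongrightarrow> f t"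
  shows "N_Morse_ray (\<lambda>l e. N l (e + 1) + 1) f"
  using Morse_bounded_pointwise_limit[OF assms(1,3)] assms(2)
  unfolding N_Morse_ray_iff_Morse_bounded by simp

section \<open>Compactness of geodesic rays\<close>

lemma diagonal_subsequence_convergent:
  fixes h :: "nat \<Rightarrow> 'b \<Rightarrow> 'a::metric_space" and q :: "nat \<Rightarrow> 'b"
  assumes cpt: "\<And>i. \<exists>K. compact K \<and> (\<forall>k. h k (q i) \<in> K)"
  shows "\<exists>d. strict_mono d \<and> (\<forall>i. convergent (\<lambda>k. h (d k) (q i)))"
proof -
  let ?P = "\<lambda>i s. convergent (\<lambda>k. h (s k) (q i))"
  interpret subseqs ?P
  proof
    fix i and s :: "nat \<Rightarrow> nat"
    obtain K where "compact K" "\<forall>k. h (s k) (q i) \<in> K" using cpt[of i] by blast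
    then obtain l r where "strict_mono r" "((\<lambda>k. h (s k) (q i)) \<circ> r) \<longlonglongrightarrow> l"
      using compact_imp_seq_compact seq_compactE by metis
    then show "\<exists>r'. strict_mono r' \<and> ?P i (s \<circ> r')"
      by (auto simp: convergent_def o_def)
  qed
  have "?P i diagseq" for i
  proof -
    have "?P i (diagseq \<circ> (+) (Suc i))"
      by (rule diagseq_holds) (auto dest: convergent_subseq_convergent simp: o_def)
    moreover have "(diagseq \<circ> (+) (Suc i)) k = diagseq (k + Suc i)" for k
      by (simp add: add.commute)
    ultimately show ?thesis
      using convergent_ignore_initial_segment[of "\<lambda>k. h (diagseq k) (q i)" "Suc i"] by simp
  qed
  then show ?thesis using subseq_diagseq by blast
qed

lemma Cauchy_1_lipschitz_dense:
  fixes h :: "nat \<Rightarrow> real \<Rightarrow> 'a::metric_space"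
  assumes lip: "\<And>k s t. dist (h k s) (h k t) \<le> \<bar>s - t\<bar>"
    and dense: "\<And>x y. x < y \<Longrightarrow> \<exists>i. x < q i \<and> q i < y"
    and conv: "\<And>i. convergent (\<lambda>k. h k (q i))"
  shows "Cauchy (\<lambda>k. h k t)"
proof (rule metric_CauchyI)
  fix e :: real assume e: "0 < e"
  obtain i where i: "t < q i" "q i < t + e/3" using dense[of t "t + e/3"] e by auto
  have "e/3 > 0" using e by simp
  then obtain M where M: "\<forall>m\<ge>M. \<forall>k\<ge>M. dist (h m (q i)) (h k (q i)) < e/3"
    using metric_CauchyD[OF convergent_Cauchy[OF conv[of i]]] by blast
  have "dist (h m t) (h k t) < e" if "M \<le> m" "M \<le> k" for m k
  proof -
    have "dist (h m t) (h m (q i)) < e/3" "dist (h k (q i)) (h k t) < e/3"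
      using lip[of m t "q i"] lip[of k "q i" t] i by simp_all
    then show ?thesis
      using M that dist_triangle[of "h m t" "h k t" "h m (q i)"]
        dist_triangle[of "h m (q i)" "h k t" "h k (q i)"] by fastforce
  qed
  then show "\<exists>M. \<forall>m\<ge>M. \<forall>k\<ge>M. dist (h m t) (h k t) < e" by blast
qed

lemma geodesic_rays_convergent_subsequence:
  fixes h :: "nat \<Rightarrow> real \<Rightarrow> 'a::metric_space"
  assumes proper: "proper_space TYPE('a)" and rays: "\<And>k. geodesic_ray x0 (h k)"
  shows "\<exists>r f. strict_mono r \<and> (\<forall>t. (\<lambda>j. h (r j) t) \<longlonglongrightarrow> f t)"
proof -
  have in_cball: "h k t \<in> cball x0 \<bar>t\<bar>" for k t
    using geodesic_ray_lipschitz[OF rays[of k], of 0 t] rays[of k] unfolding geodesic_ray_def by simp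
  have cpt: "compact (cball x0 r)" for r using proper unfolding proper_space_def by blast
  define q :: "nat \<Rightarrow> real" where "q = of_rat \<circ> nat_to_rat_surj"
  have dense: "\<exists>i. x < q i \<and> q i < y" if "x < y" for x y
    using Rats_dense_in_real[OF that] surj_of_rat_nat_to_rat_surj by (metis comp_apply q_def)
  obtain d where d: "strict_mono d" "\<And>i. convergent (\<lambda>k. h (d k) (q i))"
    using diagonal_subsequence_convergent[of h q] in_cball cpt by blast
  have "\<exists>l. (\<lambda>k. h (d k) t) \<longlonglongrightarrow> l" for t
  proof -
    have "Cauchy (\<lambda>k. h (d k) t)"
      by (rule Cauchy_1_lipschitz_dense[OF geodesic_ray_lipschitz[OF rays] dense d(2)])
    moreover have "\<forall>k. h (d k) t \<in> cball x0 \<bar>t\<bar>" using in_cball by blast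
    ultimately show ?thesis
      using compact_imp_complete[OF cpt[of "\<bar>t\<bar>"]] unfolding complete_def
      by (blast dest: spec[where x = "\<lambda>k. h (d k) t"])
  qed
  then obtain f where "\<And>t. (\<lambda>k. h (d k) t) \<longlonglongrightarrow> f t" by metis
  then show ?thesis using d(1) by blast
qed

section \<open>Topologies on rays and on the Morse boundary\<close>

lemma limitin_sequentially_subsubsequence:
  assumes "l \<in> topspace X"
    and sub: "\<And>r :: nat \<Rightarrow> nat. strict_mono r \<Longrightarrow>
      \<exists>r' :: nat \<Rightarrow> nat. strict_mono r' \<and> limitin X (f \<circ> r \<circ> r') l sequentially"
  shows "limitin X f l sequentially"
proof (rule ccontr)
  assume "\<not> limitin X f l sequentially"
  then obtain U where U: "openin X U" "l \<in> U" "\<not> eventually (\<lambda>n. f n \<in> U) sequentially"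
    using assms(1) unfolding limitin_def by blast
  then obtain r :: "nat \<Rightarrow> nat" where r: "strict_mono r" "\<And>n. f (r n) \<notin> U"
    using not_eventually_sequentiallyD[OF U(3)] by blast
  then obtain r' where "limitin X (f \<circ> r \<circ> r') l sequentially" using sub by blast
  then have "eventually (\<lambda>n. f (r (r' n)) \<in> U) sequentially"
    using U(1,2) unfolding limitin_def by auto
  then show False using r(2) by (simp add: eventually_sequentially)
qed

lemma openin_quotient_topology:
  "openin (quotient_topology T q) U \<longleftrightarrow> U \<subseteq> q ` topspace T \<and> openin T {x \<in> topspace T. q x \<in> U}"
proof -
  define P where "P = (\<lambda>U. U \<subseteq> q ` topspace T \<and> openin T {x \<in> topspace T. q x \<in> U})"
  have "istopology P"
    unfolding istopology_def
  proof (intro conjI allI impI)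
    fix S S' assume "P S" "P S'"
    moreover have "{x \<in> topspace T. q x \<in> S \<inter> S'} = {x \<in> topspace T. q x \<in> S} \<inter> {x \<in> topspace T. q x \<in> S'}"
      by auto
    ultimately show "P (S \<inter> S')" unfolding P_def by (auto intro: openin_Int)
  next
    fix K assume "\<forall>S\<in>K. P S"
    moreover have "{x \<in> topspace T. q x \<in> \<Union>K} = (\<Union>S\<in>K. {x \<in> topspace T. q x \<in> S})" by auto
    ultimately show "P (\<Union>K)" unfolding P_def by (auto intro: openin_Union)
  qed
  then show ?thesis unfolding quotient_topology_def P_def[symmetric] by (simp add: P_def)
qed

lemma topspace_quotient_topology: "topspace (quotient_topology T q) = q ` topspace T"
proof -
  have "{x \<in> topspace T. q x \<in> q ` topspace T} = topspace T" by auto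
  then have "openin (quotient_topology T q) (q ` topspace T)"
    unfolding openin_quotient_topology by simp
  then show ?thesis
    using openin_subset unfolding topspace_def openin_quotient_topology by blast
qed

lemma quotient_map_quotient_topology: "quotient_map T (quotient_topology T q) q"
  unfolding quotient_map_def topspace_quotient_topology openin_quotient_topology by blast

lemma topspace_compact_open_on [simp]: "topspace (compact_open_on S) = S"
proof -
  have "UNIV \<in> {{f::real \<Rightarrow> 'a::topological_space. f ` K \<subseteq> U} | K U. compact K \<and> K \<subseteq> {0..} \<and> open U}"
    by (rule CollectI, rule exI[of _ "{}"], rule exI[of _ UNIV]) auto
  then show ?thesis unfolding compact_open_on_def by auto
qed

lemma openin_compact_open_on_evaluation:
  assumes "T \<ge> 0" "open U"
  shows "openin (compact_open_on S) {\<phi> \<in> S. \<phi> T \<in> U}"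
proof -
  have "{\<phi>. \<phi> ` {T} \<subseteq> U} \<in> {{f. f ` K \<subseteq> U} | K U. compact K \<and> K \<subseteq> {0..} \<and> open U}"
    using assms by (intro CollectI exI[of _ "{T}"] exI[of _ U]) auto
  then have "openin (compact_open_on S) (S \<inter> {\<phi>. \<phi> ` {T} \<subseteq> U})"
    unfolding compact_open_on_def openin_subtopology by (blast intro: topology_generated_by_Basis)
  moreover have "S \<inter> {\<phi>. \<phi> ` {T} \<subseteq> U} = {\<phi> \<in> S. \<phi> T \<in> U}" by auto
  ultimately show ?thesis by simp
qed

lemma limitin_compact_open_on_1_lipschitz:
  fixes \<phi> :: "nat \<Rightarrow> real \<Rightarrow> 'a::metric_space" and f :: "real \<Rightarrow> 'a"
  assumes S: "\<And>n. \<phi> n \<in> S" "f \<in> S"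
    and lip: "\<And>n s t. dist (\<phi> n s) (\<phi> n t) \<le> \<bar>s - t\<bar>" and lipf: "\<And>s t. dist (f s) (f t) \<le> \<bar>s - t\<bar>"
    and conv: "\<And>t. t \<ge> 0 \<Longrightarrow> (\<lambda>n. \<phi> n t) \<longlonglongrightarrow> f t"
  shows "limitin (compact_open_on S) \<phi> f sequentially"
proof -
  define B where "B = {{g::real \<Rightarrow> 'a. g ` K \<subseteq> U} | K U. compact K \<and> K \<subseteq> {0..} \<and> open U}"
  have "f \<in> W \<longrightarrow> eventually (\<lambda>n. \<phi> n \<in> W) sequentially" if "generate_topology_on B W" for W
    using that
  proof (induction rule: generate_topology_on.induct)
    case (Int a b) then show ?case by (auto intro: eventually_conj)
  next
    case (UN K) then show ?case by (auto intro: eventually_mono)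
  next
    case (Basis s)
    then obtain K U where s: "s = {g. g ` K \<subseteq> U}" "compact K" "K \<subseteq> {0..}" "open U"
      unfolding B_def by blast
    show ?case
    proof
      assume "f \<in> s"
      then have "f ` K \<subseteq> U" using s by simp
      moreover have "compact (f ` K)" by (rule compact_continuous_image[OF continuous_on_1_lipschitz[OF lipf] s(2)])
      ultimately obtain \<epsilon> where \<epsilon>: "0 < \<epsilon>" "\<And>x. x \<in> f ` K \<Longrightarrow> ball x \<epsilon> \<subseteq> U"
        using Heine_Borel_lemma[of "f ` K" "{U}"] s(4) by auto
      obtain R where "\<forall>x\<in>K. \<bar>x\<bar> \<le> R" using compact_imp_bounded[OF s(2)] bounded_real by blast
      then have "K \<subseteq> {0..R}" using s(3) by force
      moreover have "eventually (\<lambda>n. \<forall>t\<in>{0..R}. dist (\<phi> n t) (f t) < \<epsilon>) sequentially"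
        by (rule uniform_convergence_1_lipschitz[OF lip lipf conv \<epsilon>(1)])
      ultimately show "eventually (\<lambda>n. \<phi> n \<in> s) sequentially"
        using \<epsilon>(2) unfolding s(1) by (elim eventually_mono) (force simp: dist_commute)
    qed
  qed simp
  moreover have "f \<in> topspace (topology_generated_by B)"
    using topspace_compact_open_on[of S] S(2) unfolding compact_open_on_def topspace_subtopology B_def by blast
  ultimately have "limitin (topology_generated_by B) \<phi> f sequentially"
    unfolding limitin_def using openin_topology_generated_by by blast
  then show ?thesis
    unfolding compact_open_on_def limitin_subtopology B_def[symmetric] using S by auto
qed

lemma topspace_Morse_boundary_N_top: "topspace (Morse_boundary_N_top x0 N) = Morse_boundary_N x0 N"
  unfolding Morse_boundary_N_top_def topspace_quotient_topology topspace_compact_open_on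
    Morse_boundary_N_def ..

lemma openin_Morse_boundary_top:
  "openin (Morse_boundary_top x0) U \<longleftrightarrow> U \<subseteq> Morse_boundary x0 \<and>
     (\<forall>N. morse_gauge N \<longrightarrow> openin (Morse_boundary_N_top x0 N) (U \<inter> Morse_boundary_N x0 N))"
proof -
  define P where "P = (\<lambda>U. U \<subseteq> Morse_boundary x0 \<and>
     (\<forall>N. morse_gauge N \<longrightarrow> openin (Morse_boundary_N_top x0 N) (U \<inter> Morse_boundary_N x0 N)))"
  have "istopology P"
    unfolding istopology_def
  proof (intro conjI allI impI)
    fix S S' assume "P S" "P S'"
    moreover have "S \<inter> S' \<inter> Morse_boundary_N x0 N =
        (S \<inter> Morse_boundary_N x0 N) \<inter> (S' \<inter> Morse_boundary_N x0 N)" for N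
      by auto
    ultimately show "P (S \<inter> S')" unfolding P_def by (auto intro: openin_Int)
  next
    fix K assume K: "\<forall>S\<in>K. P S"
    have "openin (Morse_boundary_N_top x0 N) (\<Union>K \<inter> Morse_boundary_N x0 N)" if "morse_gauge N" for N
    proof -
      have "\<Union>K \<inter> Morse_boundary_N x0 N = (\<Union>S\<in>K. S \<inter> Morse_boundary_N x0 N)" by auto
      moreover have "openin (Morse_boundary_N_top x0 N) (\<Union>S\<in>K. S \<inter> Morse_boundary_N x0 N)"
        using K that unfolding P_def by (intro openin_Union) auto
      ultimately show ?thesis by (simp only:)
    qed
    then show "P (\<Union>K)" using K unfolding P_def by blast
  qed
  then show ?thesis unfolding Morse_boundary_top_def P_def[symmetric] by (simp add: P_def)
qed

lemma Morse_classes_separated: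
  fixes g :: "real \<Rightarrow> 'a::metric_space"
  assumes geo: "geodesic_space TYPE('a)" and M: "morse_gauge M" and g: "g \<in> NMorse_rays x0 M"
    and q: "q \<noteq> morse_class x0 g"
  shows "\<exists>T\<ge>0. \<forall>\<phi>\<in>NMorse_rays x0 M. morse_class x0 \<phi> = q \<longrightarrow> r \<le> dist (\<phi> T) (g T)"
proof (cases "\<exists>\<psi>\<in>NMorse_rays x0 M. morse_class x0 \<psi> = q")
  case True
  then obtain \<psi> where \<psi>: "\<psi> \<in> NMorse_rays x0 M" "morse_class x0 \<psi> = q" by blast
  have "\<exists>T\<ge>0. dist (g T) (\<psi> T) > 2 * M 3 0 + r"
  proof (rule ccontr)
    assume "\<not> ?thesis"
    then have "fin_hausdorff g \<psi>" by (intro fin_hausdorffI[of _ _ "2 * M 3 0 + r"]) (simp add: not_less)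
    then show False using q \<psi>(2) morse_class_eq by metis
  qed
  then obtain T where T: "T \<ge> 0" "dist (g T) (\<psi> T) > 2 * M 3 0 + r" by blast
  have "r \<le> dist (\<phi> T) (g T)" if "\<phi> \<in> NMorse_rays x0 M" "morse_class x0 \<phi> = q" for \<phi>
  proof -
    have "dist (\<phi> T) (\<psi> T) \<le> 2 * M 3 0"
      using NMorse_rays_same_class_fellow[OF geo that(1) Morse_ray_if_NMorse_rays[OF M \<psi>(1)] _ T(1)]
        that(2) \<psi>(2) by simp
    then show ?thesis using T(2) dist_triangle[of "g T" "\<psi> T" "\<phi> T"] by (simp add: dist_commute)
  qed
  then show ?thesis using T(1) by blast
qed blast

lemma NMorse_rays_nbhd_avoiding_finite:
  fixes g :: "real \<Rightarrow> 'a::metric_space"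
  assumes geo: "geodesic_space TYPE('a)" and M: "morse_gauge M" and g: "g \<in> NMorse_rays x0 M"
    and Q: "finite Q" "morse_class x0 g \<notin> Q"
  shows "\<exists>Y. openin (compact_open_on (NMorse_rays x0 M)) Y \<and> g \<in> Y \<and> (\<forall>\<phi>\<in>Y. morse_class x0 \<phi> \<notin> Q)"
proof -
  have "\<forall>q\<in>Q. \<exists>t\<ge>0. \<forall>\<phi>\<in>NMorse_rays x0 M. morse_class x0 \<phi> = q \<longrightarrow> 1 \<le> dist (\<phi> t) (g t)"
  proof
    fix q assume "q \<in> Q"
    then show "\<exists>t\<ge>0. \<forall>\<phi>\<in>NMorse_rays x0 M. morse_class x0 \<phi> = q \<longrightarrow> 1 \<le> dist (\<phi> t) (g t)"
      using Morse_classes_separated[OF geo M g, of q 1] Q(2) by fastforce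
  qed
  from bchoice[OF this] obtain T where T: "\<forall>q\<in>Q. T q \<ge> 0 \<and>
      (\<forall>\<phi>\<in>NMorse_rays x0 M. morse_class x0 \<phi> = q \<longrightarrow> 1 \<le> dist (\<phi> (T q)) (g (T q)))"
    by blast
  define Y where "Y = NMorse_rays x0 M \<inter> (\<Inter>q\<in>Q. {\<phi> \<in> NMorse_rays x0 M. \<phi> (T q) \<in> ball (g (T q)) 1})"
  have "openin (compact_open_on (NMorse_rays x0 M)) Y"
    unfolding Y_def
  proof (rule openin_Int_Inter)
    show "openin (compact_open_on (NMorse_rays x0 M)) (NMorse_rays x0 M)"
      using openin_topspace[of "compact_open_on (NMorse_rays x0 M)"] by simp
    fix X assume "X \<in> (\<lambda>q. {\<phi> \<in> NMorse_rays x0 M. \<phi> (T q) \<in> ball (g (T q)) 1}) ` Q"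
    then obtain q where "q \<in> Q" "X = {\<phi> \<in> NMorse_rays x0 M. \<phi> (T q) \<in> ball (g (T q)) 1}" by blast
    then show "openin (compact_open_on (NMorse_rays x0 M)) X"
      using T openin_compact_open_on_evaluation[of "T q" "ball (g (T q)) 1"] by simp
  qed (use Q(1) in simp)
  moreover have "g \<in> Y" using g by (simp add: Y_def)
  moreover have "morse_class x0 \<phi> \<notin> Q" if "\<phi> \<in> Y" for \<phi>
    using that T by (force simp: Y_def dist_commute)
  ultimately show ?thesis by blast
qed

lemma openin_Morse_boundary_top_Diff:
  assumes nbhd: "\<And>M g. morse_gauge M \<Longrightarrow> g \<in> NMorse_rays x0 M \<Longrightarrow> morse_class x0 g \<notin> A \<Longrightarrow>
      \<exists>Y. openin (compact_open_on (NMorse_rays x0 M)) Y \<and> g \<in> Y \<and> (\<forall>\<phi>\<in>Y. morse_class x0 \<phi> \<notin> A)"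
  shows "openin (Morse_boundary_top x0) (Morse_boundary x0 - A)"
  unfolding openin_Morse_boundary_top
proof (intro conjI allI impI)
  fix M :: "real \<Rightarrow> real \<Rightarrow> real" assume M: "morse_gauge M"
  have "openin (compact_open_on (NMorse_rays x0 M)) {g \<in> NMorse_rays x0 M. morse_class x0 g \<notin> A}"
  proof (subst openin_subopen, intro ballI)
    fix g assume g: "g \<in> {g \<in> NMorse_rays x0 M. morse_class x0 g \<notin> A}"
    then obtain Y where Y: "openin (compact_open_on (NMorse_rays x0 M)) Y" "g \<in> Y"
      "\<forall>\<phi>\<in>Y. morse_class x0 \<phi> \<notin> A"
      using nbhd[OF M] by blast
    then show "\<exists>Y. openin (compact_open_on (NMorse_rays x0 M)) Y \<and> g \<in> Y \<and>
        Y \<subseteq> {g \<in> NMorse_rays x0 M. morse_class x0 g \<notin> A}"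
      using openin_subset[OF Y(1)] by auto
  qed
  moreover have "{g \<in> NMorse_rays x0 M. morse_class x0 g \<in> (Morse_boundary x0 - A) \<inter> Morse_boundary_N x0 M}
      = {g \<in> NMorse_rays x0 M. morse_class x0 g \<notin> A}"
    using Morse_ray_if_NMorse_rays[OF M] unfolding Morse_boundary_def Morse_boundary_N_def by blast
  ultimately show "openin (Morse_boundary_N_top x0 M) ((Morse_boundary x0 - A) \<inter> Morse_boundary_N x0 M)"
    unfolding Morse_boundary_N_top_def openin_quotient_topology topspace_compact_open_on
    unfolding Morse_boundary_N_def by auto
qed blast

lemma limitin_Morse_boundary_top_eventually_notin:
  assumes "limitin (Morse_boundary_top x0) pn p sequentially" "p \<in> Morse_boundary x0" "p \<notin> A"
    and "\<And>M g. morse_gauge M \<Longrightarrow> g \<in> NMorse_rays x0 M \<Longrightarrow> morse_class x0 g \<notin> A \<Longrightarrow>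
      \<exists>Y. openin (compact_open_on (NMorse_rays x0 M)) Y \<and> g \<in> Y \<and> (\<forall>\<phi>\<in>Y. morse_class x0 \<phi> \<notin> A)"
  shows "eventually (\<lambda>n. pn n \<notin> A) sequentially"
  using limitinD[OF assms(1) openin_Morse_boundary_top_Diff[OF assms(4)]] assms(2,3)
  by (auto elim: eventually_mono)

text \<open>Otherwise choose rays hs (nk k) violating the bound k. By Morse_bounded_same_class each
  stratum contains the classes of only finitely many of them, so those with k beyond the bound of
  the stratum of p form a closed set that misses p but is visited infinitely often.\<close>
lemma Morse_boundary_convergent_uniformly_bounded:
  fixes hs :: "nat \<Rightarrow> real \<Rightarrow> 'a::metric_space"
  assumes geo: "geodesic_space TYPE('a)" and lim: "limitin (Morse_boundary_top x0) pn p sequentially"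
    and p: "morse_gauge N0" "p \<in> Morse_boundary_N x0 N0"
    and hs: "\<And>n. morse_gauge (Ns n)" "\<And>n. hs n \<in> NMorse_rays x0 (Ns n)" "\<And>n. pn n = morse_class x0 (hs n)"
    and le: "l \<ge> 1" "e \<ge> 0"
  shows "\<exists>B. \<forall>n. Morse_bounded l e B (hs n)"
proof (rule ccontr)
  assume "\<not> ?thesis"
  then have "\<forall>k::nat. \<exists>n. \<not> Morse_bounded l e (real k) (hs n)" by blast
  then obtain nk where nk: "\<And>k::nat. \<not> Morse_bounded l e (real k) (hs (nk k))" by metis
  define \<beta> where "\<beta> M = M l (e + 4 * M 3 0) + 4 * M 3 0" for M :: "real \<Rightarrow> real \<Rightarrow> real"
  have small: "real k < \<beta> M" if M: "pn (nk k) \<in> Morse_boundary_N x0 M" for M k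
  proof -
    obtain \<phi> where "\<phi> \<in> NMorse_rays x0 M" "morse_class x0 \<phi> = pn (nk k)"
      using M unfolding Morse_boundary_N_def by blast
    then have "Morse_bounded l e (\<beta> M) (hs (nk k))"
      unfolding \<beta>_def using Morse_bounded_same_class[OF geo _ Morse_ray_if_NMorse_rays[OF hs(1,2)] _ le] hs(3)
      by simp
    then show ?thesis using nk[of k] Morse_bounded_mono by (meson not_le)
  qed
  define A where "A = {pn (nk k) | k. \<beta> N0 < real k}"
  have "eventually (\<lambda>n. pn n \<notin> A) sequentially"
  proof (rule limitin_Morse_boundary_top_eventually_notin[OF lim])
    show "p \<in> Morse_boundary x0" using p Morse_boundary_N_subset by blast
    show "p \<notin> A" using small p(2) unfolding A_def by fastforce
    fix M and g :: "real \<Rightarrow> 'a" assume M: "morse_gauge M" and g: "g \<in> NMorse_rays x0 M"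
      and "morse_class x0 g \<notin> A"
    define Q where "Q = A \<inter> (\<lambda>k. pn (nk k)) ` {..nat \<lceil>\<beta> M\<rceil>}"
    have AQ: "A \<inter> Morse_boundary_N x0 M \<subseteq> Q"
    proof
      fix q assume "q \<in> A \<inter> Morse_boundary_N x0 M"
      then obtain k where k: "q = pn (nk k)" "q \<in> A" "pn (nk k) \<in> Morse_boundary_N x0 M"
        unfolding A_def by blast
      then have "k \<le> nat \<lceil>\<beta> M\<rceil>" using small[OF k(3)] by linarith
      then show "q \<in> Q" using k unfolding Q_def by blast
    qed
    obtain Y where Y: "openin (compact_open_on (NMorse_rays x0 M)) Y" "g \<in> Y"
      "\<forall>\<phi>\<in>Y. morse_class x0 \<phi> \<notin> Q"
      using NMorse_rays_nbhd_avoiding_finite[OF geo M g, of Q] \<open>morse_class x0 g \<notin> A\<close>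
      unfolding Q_def by blast
    have "morse_class x0 \<phi> \<notin> A" if "\<phi> \<in> Y" for \<phi>
    proof
      assume "morse_class x0 \<phi> \<in> A"
      moreover have "\<phi> \<in> NMorse_rays x0 M" using openin_subset[OF Y(1)] that by auto
      ultimately show False using AQ Morse_boundary_NI Y(3) that by blast
    qed
    then show "\<exists>Y. openin (compact_open_on (NMorse_rays x0 M)) Y \<and> g \<in> Y \<and>
        (\<forall>\<phi>\<in>Y. morse_class x0 \<phi> \<notin> A)"
      using Y(1,2) by blast
  qed
  then obtain n0 where n0: "\<And>n. n \<ge> n0 \<Longrightarrow> pn n \<notin> A" unfolding eventually_sequentially by blast
  define K where "K = Max (insert (\<beta> N0) ((\<lambda>n. \<beta> (Ns n)) ` {..n0}))"
  have "finite (insert (\<beta> N0) ((\<lambda>n. \<beta> (Ns n)) ` {..n0}))" by simp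
  then have K: "\<beta> N0 \<le> K" "\<And>n. n \<le> n0 \<Longrightarrow> \<beta> (Ns n) \<le> K"
    unfolding K_def by (blast intro: Max_ge)+
  define k where "k = nat \<lceil>K\<rceil> + 1"
  have "K < real k" unfolding k_def by linarith
  have "nk k > n0"
  proof (rule ccontr)
    assume "\<not> nk k > n0"
    then have "\<beta> (Ns (nk k)) \<le> K" using K(2) by simp
    moreover have "real k < \<beta> (Ns (nk k))" using small Morse_boundary_NI[OF hs(2)] hs(3) by metis
    ultimately show False using \<open>K < real k\<close> by linarith
  qed
  moreover have "pn (nk k) \<in> A" unfolding A_def using K(1) \<open>K < real k\<close> by force
  ultimately show False using n0 by simp
qed

text \<open>The classes of a pointwise convergent sequence of Morse rays, together with the class of
  the limit, form a closed set: a ray g outside it is far from the limit at some time T0, hence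
  so are all rays near g, and those cannot fellow-travel the limit or the tail of the sequence.\<close>
lemma NMorse_rays_nbhd_avoiding_convergent:
  fixes \<psi> :: "nat \<Rightarrow> real \<Rightarrow> 'a::metric_space"
  assumes geo: "geodesic_space TYPE('a)" and M: "morse_gauge M" and g: "g \<in> NMorse_rays x0 M"
    and \<psi>: "\<And>j. Morse_ray x0 (\<psi> j)" and f: "Morse_ray x0 f" and conv: "\<And>t. (\<lambda>j. \<psi> j t) \<longlonglongrightarrow> f t"
    and gA: "morse_class x0 g \<notin> insert (morse_class x0 f) ((\<lambda>j. morse_class x0 (\<psi> j)) ` I)"
  shows "\<exists>Y. openin (compact_open_on (NMorse_rays x0 M)) Y \<and> g \<in> Y \<and>
    (\<forall>\<phi>\<in>Y. morse_class x0 \<phi> \<notin> insert (morse_class x0 f) ((\<lambda>j. morse_class x0 (\<psi> j)) ` I))"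
    (is "\<exists>Y. _ \<and> _ \<and> (\<forall>\<phi>\<in>Y. morse_class x0 \<phi> \<notin> ?A)")
proof -
  have "\<exists>T0\<ge>0. dist (g T0) (f T0) > 2 * M 3 0 + 2"
  proof (rule ccontr)
    assume "\<not> ?thesis"
    then have "fin_hausdorff g f" by (intro fin_hausdorffI[of _ _ "2 * M 3 0 + 2"]) (simp add: not_less)
    then show False using gA morse_class_eq by blast
  qed
  then obtain T0 where T0: "T0 \<ge> 0" "dist (g T0) (f T0) > 2 * M 3 0 + 2" by blast
  obtain J where J: "\<And>j. j \<ge> J \<Longrightarrow> dist (\<psi> j T0) (f T0) < 1"
    using tendstoD[OF conv[of T0], of 1] unfolding eventually_sequentially by auto
  define Q where "Q = ?A \<inter> (\<lambda>j. morse_class x0 (\<psi> j)) ` {..<J}"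
  obtain Y where Y: "openin (compact_open_on (NMorse_rays x0 M)) Y" "g \<in> Y"
    "\<forall>\<phi>\<in>Y. morse_class x0 \<phi> \<notin> Q"
    using NMorse_rays_nbhd_avoiding_finite[OF geo M g, of Q] gA unfolding Q_def by blast
  define Y' where "Y' = Y \<inter> {\<phi> \<in> NMorse_rays x0 M. \<phi> T0 \<in> ball (g T0) 1}"
  have "openin (compact_open_on (NMorse_rays x0 M)) Y'"
    unfolding Y'_def by (intro openin_Int Y(1) openin_compact_open_on_evaluation T0(1) open_ball)
  moreover have "g \<in> Y'" using Y(2) g by (simp add: Y'_def)
  moreover have "morse_class x0 \<phi> \<notin> ?A" if "\<phi> \<in> Y'" for \<phi>
  proof
    assume \<phi>A: "morse_class x0 \<phi> \<in> ?A"
    have \<phi>: "\<phi> \<in> NMorse_rays x0 M" "dist (g T0) (\<phi> T0) < 1" using that by (auto simp: Y'_def)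
    have fellow: "dist (\<phi> T0) (h T0) \<le> 2 * M 3 0" if "Morse_ray x0 h" "morse_class x0 \<phi> = morse_class x0 h" for h
      by (rule NMorse_rays_same_class_fellow[OF geo \<phi>(1) that T0(1)])
    have far: "dist (\<phi> T0) (f T0) > 2 * M 3 0 + 1"
      using T0(2) \<phi>(2) dist_triangle[of "g T0" "f T0" "\<phi> T0"] by linarith
    consider "morse_class x0 \<phi> = morse_class x0 f" | j where "j \<in> I" "j < J" "morse_class x0 \<phi> = morse_class x0 (\<psi> j)"
      | j where "j \<ge> J" "morse_class x0 \<phi> = morse_class x0 (\<psi> j)"
      using \<phi>A not_le by blast
    then show False
    proof cases
      case 1 then show False using fellow[OF f] far by linarith
    next
      case 2 then show False using Y(3) that \<phi>A unfolding Y'_def Q_def by blast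
    next
      case 3 then show False
        using fellow[OF \<psi>] far J[OF 3(1)] dist_triangle[of "\<phi> T0" "f T0" "\<psi> j T0"] by fastforce
    qed
  qed
  ultimately show ?thesis by blast
qed

lemma Morse_boundary_limit_class:
  fixes \<psi> :: "nat \<Rightarrow> real \<Rightarrow> 'a::metric_space"
  assumes geo: "geodesic_space TYPE('a)" and N: "morse_gauge N" and \<psi>: "\<And>j. \<psi> j \<in> NMorse_rays x0 N"
    and f: "Morse_ray x0 f" and conv: "\<And>t. (\<lambda>j. \<psi> j t) \<longlonglongrightarrow> f t"
    and lim: "limitin (Morse_boundary_top x0) (\<lambda>j. morse_class x0 (\<psi> j)) p sequentially"
    and p: "p \<in> Morse_boundary x0"
  shows "morse_class x0 f = p"
proof (rule ccontr)
  assume fp: "morse_class x0 f \<noteq> p"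
  have \<psi>M: "Morse_ray x0 (\<psi> j)" for j by (rule Morse_ray_if_NMorse_rays[OF N \<psi>])
  let ?A = "insert (morse_class x0 f) ((\<lambda>j. morse_class x0 (\<psi> j)) ` {j. morse_class x0 (\<psi> j) \<noteq> p})"
  have "eventually (\<lambda>j. morse_class x0 (\<psi> j) \<notin> ?A) sequentially"
    by (rule limitin_Morse_boundary_top_eventually_notin[OF lim p])
      (use fp NMorse_rays_nbhd_avoiding_convergent[OF geo _ _ \<psi>M f conv] in auto)
  then obtain J where J: "\<And>j. j \<ge> J \<Longrightarrow> morse_class x0 (\<psi> j) = p"
    unfolding eventually_sequentially by blast
  have "dist (f t) (\<psi> J t) \<le> 2 * N 3 0" if "t \<ge> 0" for t
  proof (rule LIMSEQ_le_const2)
    show "(\<lambda>j. dist (\<psi> j t) (\<psi> J t)) \<longlonglongrightarrow> dist (f t) (\<psi> J t)" by (intro tendsto_intros conv)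
    show "\<exists>j0. \<forall>j\<ge>j0. dist (\<psi> j t) (\<psi> J t) \<le> 2 * N 3 0"
      using NMorse_rays_same_class_fellow[OF geo \<psi> \<psi>M _ that] J by (intro exI[of _ J]) simp
  qed
  then have "morse_class x0 f = morse_class x0 (\<psi> J)" by (intro morse_class_eq fin_hausdorffI)
  then show False using fp J by simp
qed

lemma limitin_Morse_boundary_N_top:
  fixes hs :: "nat \<Rightarrow> real \<Rightarrow> 'a::metric_space"
  assumes proper: "proper_space TYPE('a)" and geo: "geodesic_space TYPE('a)" and N: "morse_gauge N"
    and lim: "limitin (Morse_boundary_top x0) pn p sequentially" and p: "p \<in> Morse_boundary_N x0 N"
    and hs: "\<And>n. hs n \<in> NMorse_rays x0 N" "\<And>n. pn n = morse_class x0 (hs n)"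
    and shift: "\<And>n. N_Morse_ray N' (hs n)" "\<And>l e. l \<ge> 1 \<Longrightarrow> e \<ge> 0 \<Longrightarrow> N' l (e + 1) + 1 \<le> N l e"
  shows "limitin (Morse_boundary_N_top x0 N) pn p sequentially"
proof (rule limitin_sequentially_subsubsequence)
  show "p \<in> topspace (Morse_boundary_N_top x0 N)" using p by (simp add: topspace_Morse_boundary_N_top)
  have rays: "geodesic_ray x0 (hs n)" for n using hs(1) unfolding NMorse_rays_def by blast
  fix r :: "nat \<Rightarrow> nat" assume r: "strict_mono r"
  obtain r' f where r': "strict_mono r'" "\<And>t. (\<lambda>j. hs (r (r' j)) t) \<longlonglongrightarrow> f t"
    using geodesic_rays_convergent_subsequence[OF proper, of x0 "hs \<circ> r"] rays by auto
  define \<psi> where "\<psi> = hs \<circ> r \<circ> r'"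
  have conv: "(\<lambda>j. \<psi> j t) \<longlonglongrightarrow> f t" for t using r'(2) by (simp add: \<psi>_def)
  have \<psi>_ray: "geodesic_ray x0 (\<psi> j)" for j by (simp add: \<psi>_def rays)
  have f_ray: "geodesic_ray x0 f" by (rule geodesic_ray_pointwise_limit[OF \<psi>_ray conv])
  have "N_Morse_ray (\<lambda>l e. N' l (e + 1) + 1) f"
    by (rule N_Morse_ray_pointwise_limit[of x0, OF _ _ conv]) (use \<psi>_ray shift(1) in \<open>simp_all add: \<psi>_def\<close>)
  then have "N_Morse_ray N f" by (rule N_Morse_ray_mono) (rule shift(2))
  then have fN: "f \<in> NMorse_rays x0 N" using f_ray by (simp add: NMorse_rays_def)
  have \<psi>N: "\<psi> j \<in> NMorse_rays x0 N" for j by (simp add: \<psi>_def hs(1))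
  have "limitin (Morse_boundary_top x0) (\<lambda>j. morse_class x0 (\<psi> j)) p sequentially"
    using limitin_subsequence[OF r' (1) limitin_subsequence[OF r lim]] by (simp add: \<psi>_def hs(2) o_def)
  then have "morse_class x0 f = p"
    using Morse_boundary_limit_class[OF geo N \<psi>N Morse_ray_if_NMorse_rays[OF N fN] conv]
      p Morse_boundary_N_subset[OF N] by blast
  moreover have "limitin (compact_open_on (NMorse_rays x0 N)) \<psi> f sequentially"
    by (rule limitin_compact_open_on_1_lipschitz[OF \<psi>N fN geodesic_ray_lipschitz
        geodesic_ray_lipschitz[OF f_ray] conv]) (rule \<psi>_ray)
  then have "limitin (Morse_boundary_N_top x0 N) (morse_class x0 \<circ> \<psi>) (morse_class x0 f) sequentially"
    unfolding Morse_boundary_N_top_def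
    by (rule continuous_map_limit[OF quotient_imp_continuous_map[OF quotient_map_quotient_topology]])
  ultimately show "\<exists>r'. strict_mono r' \<and> limitin (Morse_boundary_N_top x0 N) (pn \<circ> r \<circ> r') p sequentially"
    using r'(1) by (auto simp: \<psi>_def hs(2) o_def)
qed

theorem lemma5p3:
  fixes x0 :: "'a::metric_space"
    and pn :: "nat \<Rightarrow> (real \<Rightarrow> 'a) set" and p :: "(real \<Rightarrow> 'a) set"
  assumes "proper_space TYPE('a)" and "geodesic_space TYPE('a)"
    and "\<And>n. pn n \<in> Morse_boundary x0" and "p \<in> Morse_boundary x0"
    and "limitin (Morse_boundary_top x0) pn p sequentially"
  shows "\<exists>N. morse_gauge N \<and> (\<forall>n. pn n \<in> Morse_boundary_N x0 N) \<and> p \<in> Morse_boundary_N x0 N \<and>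
           limitin (Morse_boundary_N_top x0 N) pn p sequentially"
proof -
  obtain h N0 where h: "morse_gauge N0" "h \<in> NMorse_rays x0 N0" "p = morse_class x0 h"
    using Morse_boundary_representative[OF assms(4)] by blast
  have "\<exists>N g. morse_gauge N \<and> g \<in> NMorse_rays x0 N \<and> pn n = morse_class x0 g" for n
    by (rule Morse_boundary_representative[OF assms(3)]) blast
  then obtain hs Ns where hs: "\<And>n. morse_gauge (Ns n)" "\<And>n. hs n \<in> NMorse_rays x0 (Ns n)"
    "\<And>n. pn n = morse_class x0 (hs n)"
    by metis
  have "\<forall>l e. \<exists>B. l \<ge> 1 \<longrightarrow> e \<ge> 0 \<longrightarrow> (\<forall>n. Morse_bounded l e B (hs n))"
    using Morse_boundary_convergent_uniformly_bounded[OF assms(2,5) h(1)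
        Morse_boundary_NI[OF h(2), folded h(3)] hs] by blast
  then obtain B where B: "\<And>n. N_Morse_ray B (hs n)"
    unfolding N_Morse_ray_iff_Morse_bounded by metis
  define N where "N l e = max (N0 l e) (max 0 (B l (e + 1) + 1))" for l e
  have N: "morse_gauge N" unfolding morse_gauge_def N_def by (simp add: max.coboundedI2)
  have hsN: "hs n \<in> NMorse_rays x0 N" for n
    using N_Morse_ray_mono[OF N_Morse_ray_shift[OF B]] hs(2)[of n] by (auto simp: NMorse_rays_def N_def)
  have pN: "p \<in> Morse_boundary_N x0 N"
    using N_Morse_ray_mono[of N0 h N] h by (auto simp: NMorse_rays_def N_def intro!: Morse_boundary_NI)
  have "limitin (Morse_boundary_N_top x0 N) pn p sequentially"
    by (rule limitin_Morse_boundary_N_top[OF assms(1,2) N assms(5) pN hsN hs(3) B]) (simp add: N_def)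
  then show ?thesis using N pN Morse_boundary_NI[OF hsN] hs(3) by auto
qed

end
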